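(* Let $J$ satisfy hypothesis (H) below, let $D\subset\mathbb{R}^N$ be a bounded set and let $\Omega_1,\Omega_2\subset D$ be two bounded open sets. Then there exists $C>0$ depending only on the measures of $\Omega_1$ and $\Omega_2$ such that $$\|\tilde{\mathcal{J}}_{\Omega_1}-\tilde{\mathcal{J}}_{\Omega_2}\|_{\mathcal{L}(L^2(D))}\leq C\|J\|_{L^\infty(\mathbb{R}^N)}\left[|\Omega_1\setminus\Omega_2|+|\Omega_2\setminus\Omega_1|\right]^{1/2}.$$ In particular, $\|\tilde{\mathcal{J}}_{\Omega_1}-\tilde{\mathcal{J}}_{\Omega_2}\|_{\mathcal{L}(L^2(D))}\to0$ if $|\Omega_1\setminus\Omega_2|+|\Omega_2\setminus\Omega_1|\to0$ and $\|J\|_{L^\infty(\mathbb{R}^N)}<\infty$.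
   Context: Hypothesis (H): $J\in\mathcal{C}(\mathbb{R}^N,\mathbb{R})$ is nonnegative, spherically symmetric and radially decreasing, with $J(0)>0$ and $\int_{\mathbb{R}^N}J=1$. For a bounded open $\Omega\subset D$, $\tilde{\mathcal{J}}_\Omega:L^2(D)\to L^2(D)$ is defined by $\tilde{\mathcal{J}}_\Omega u(x)=\int_\Omega J(x-y)u(y)\,dy$ for $x\in\Omega$ and $\tilde{\mathcal{J}}_\Omega u(x)=0$ for $x\in D\setminus\Omega$. $|\cdot|$ is Lebesgue measure. *)

theory Defs
  imports "HOL-Analysis.Analysis" "HOL-Probability.Essential_Supremum"
begin

definition hypH :: "('a::euclidean_space \<Rightarrow> real) \<Rightarrow> bool" where
  "hypH J \<longleftrightarrow> continuous_on UNIV J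
     \<and> (\<forall>x. 0 \<le> J x)
     \<and> (\<forall>x y. norm x = norm y \<longrightarrow> J x = J y)
     \<and> (\<forall>x y. norm x \<le> norm y \<longrightarrow> J y \<le> J x)
     \<and> J 0 > 0
     \<and> integrable lborel J \<and> integral\<^sup>L lborel J = 1"

definition Jt :: "('a::euclidean_space \<Rightarrow> real) \<Rightarrow> 'a set \<Rightarrow> ('a \<Rightarrow> real) \<Rightarrow> 'a \<Rightarrow> real" where
  "Jt J \<Omega> u x = (if x \<in> \<Omega> then (LINT y:\<Omega>|lebesgue. J (x - y) * u y) else 0)"

definition in_L2 :: "'a::euclidean_space set \<Rightarrow> ('a \<Rightarrow> real) \<Rightarrow> bool" where
  "in_L2 D u \<longleftrightarrow> u \<in> borel_measurable lebesgue \<and> set_integrable lebesgue D (\<lambda>x. (u x)\<^sup>2)"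

definition L2norm :: "'a::euclidean_space set \<Rightarrow> ('a \<Rightarrow> real) \<Rightarrow> real" where
  "L2norm D u = sqrt (LINT x:D|lebesgue. (u x)\<^sup>2)"

definition Linf_norm :: "('a::euclidean_space \<Rightarrow> real) \<Rightarrow> real" where
  "Linf_norm J = real_of_ereal (esssup lborel (\<lambda>x. ereal \<bar>J x\<bar>))"

end

theory Submission
  imports Defs
begin

text \<open>
  At a point x the two operators differ only through the y in diff_section \<Omega>1 \<Omega>2 x, the
  section at x of the symmetric difference of \<Omega>1 \<times> \<Omega>1 and \<Omega>2 \<times> \<Omega>2; it is sym_diff \<Omega>1 \<Omega>2,
  \<Omega>1, \<Omega>2 or empty according as x lies in both sets, in only one of them, or in neither.
  Bounding J by J(0), which is its L-infinity norm, and applying Cauchy-Schwarz bounds the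
  squared difference at x by J(0) squared times the measure of this section times the squared
  L2 norm of u. Integrating the measure of the section over x gives at most
  (|\<Omega>1| + |\<Omega>2|) (|\<Omega>1 - \<Omega>2| + |\<Omega>2 - \<Omega>1|).
\<close>

lemma borel_measurable_lebesgue_continuous:
  fixes f :: "'a::euclidean_space \<Rightarrow> 'b::euclidean_space"
  shows "continuous_on UNIV f \<Longrightarrow> f \<in> borel_measurable lebesgue"
  by (rule measurable_completion) (simp add: borel_measurable_continuous_onI)

lemma esssup_lborel_ge_continuous:
  fixes g :: "'a::euclidean_space \<Rightarrow> real"
  assumes g: "continuous_on UNIV g"
  shows "ereal (g x) \<le> esssup lborel (\<lambda>y. ereal (g y))"
proof (rule ccontr)
  assume "\<not> ?thesis"
  then obtain c where c: "esssup lborel (\<lambda>y. ereal (g y)) < ereal c" "c < g x"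
    by (metis ereal_dense2 less_ereal.simps(1) not_le)
  have ae: "AE y in lborel. y \<notin> {y. c < g y}"
    using esssup_AE[of "\<lambda>y. ereal (g y)" lborel]
    by (rule eventually_mono) (use c(1) in \<open>auto dest: le_less_trans\<close>)
  have "open {y. c < g y}"
    using g by (intro open_Collect_less) auto
  with c(2) obtain r where r: "0 < r" "ball x r \<subseteq> {y. c < g y}"
    by (meson mem_Collect_eq open_contains_ball)
  have "AE y in lborel. y \<notin> ball x r"
    using ae by (rule eventually_mono) (use r(2) in auto)
  then have "emeasure lborel (ball x r) = 0"
    by (subst (asm) AE_iff_measurable[of "ball x r"]) auto
  then show False
    using content_ball_pos[OF r(1), of x] by (simp add: measure_def)
qed

lemma Linf_norm_eq_max:
  fixes J :: "'a::euclidean_space \<Rightarrow> real"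
  assumes "continuous_on UNIV J" and "\<And>y. \<bar>J y\<bar> \<le> \<bar>J x\<bar>"
  shows "Linf_norm J = \<bar>J x\<bar>"
proof -
  have "continuous_on UNIV (\<lambda>y. \<bar>J y\<bar>)"
    using assms(1) by (intro continuous_intros)
  then have "ereal \<bar>J x\<bar> \<le> esssup lborel (\<lambda>y. ereal \<bar>J y\<bar>)"
    by (rule esssup_lborel_ge_continuous)
  moreover have "esssup lborel (\<lambda>y. ereal \<bar>J y\<bar>) \<le> ereal \<bar>J x\<bar>"
    using assms borel_measurable_continuous_onI[OF assms(1)] by (intro esssup_I) auto
  ultimately show ?thesis
    unfolding Linf_norm_def by (metis antisym real_of_ereal.simps(1))
qed

lemma set_integrable_if_square:
  fixes u :: "'a \<Rightarrow> real"
  assumes A: "A \<in> sets M" "emeasure M A < \<infinity>"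
    and u: "u \<in> borel_measurable M" "set_integrable M A (\<lambda>x. (u x)\<^sup>2)"
  shows "set_integrable M A u"
proof -
  have int: "integrable M (\<lambda>x. indicator A x * (1 + (u x)\<^sup>2) :: real)"
    using A u(2) unfolding set_integrable_def distrib_left
    by (intro Bochner_Integration.integrable_add integrable_real_indicator) auto
  have "\<bar>u x\<bar> \<le> 1 + (u x)\<^sup>2" for x
    using zero_le_power2[of "\<bar>u x\<bar> - 1"] unfolding power2_eq_square by (simp add: algebra_simps)
  then show ?thesis
    unfolding set_integrable_def
    by (intro Bochner_Integration.integrable_bound[OF int])
      (use A u(1) in \<open>auto simp: indicator_def\<close>)
qed

lemma set_integral_mono_set_nonneg:
  fixes f :: "'a \<Rightarrow> real"
  assumes "set_integrable M B f" "A \<subseteq> B" "\<And>x. 0 \<le> f x"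
  shows "(LINT x:A|M. f x) \<le> (LINT x:B|M. f x)"
  unfolding set_lebesgue_integral_def
  using assms by (intro integral_mono') (auto simp: set_integrable_def indicator_def)

lemma set_integral_abs_square_le:
  fixes u :: "'a \<Rightarrow> real"
  assumes A: "A \<in> sets M" "emeasure M A < \<infinity>"
    and u: "set_integrable M A u" "set_integrable M A (\<lambda>x. (u x)\<^sup>2)"
  shows "(LINT x:A|M. \<bar>u x\<bar>)\<^sup>2 \<le> measure M A * (LINT x:A|M. (u x)\<^sup>2)"
proof -
  define f where "f x = ennreal (indicator A x * \<bar>u x\<bar>)" for x
  have iu: "integrable M (\<lambda>x. indicator A x * \<bar>u x\<bar>)"
    using integrable_abs[OF u(1)[unfolded set_integrable_def]] by (simp add: abs_mult)
  have "f x * indicator A x = f x" for x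
    by (simp add: f_def indicator_def)
  then have "(\<integral>\<^sup>+x. f x * indicator A x \<partial>M) = ennreal (LINT x:A|M. \<bar>u x\<bar>)"
    using iu by (simp add: f_def nn_integral_eq_integral set_lebesgue_integral_def)
  moreover have "(\<integral>\<^sup>+x. f x ^ 2 \<partial>M) = ennreal (LINT x:A|M. (u x)\<^sup>2)"
  proof -
    have "f x ^ 2 = ennreal (indicator A x * (u x)\<^sup>2)" for x
      by (simp add: f_def ennreal_power power_abs indicator_def)
    then show ?thesis
      using u(2) by (simp add: nn_integral_eq_integral set_integrable_def set_lebesgue_integral_def)
  qed
  moreover have "(\<integral>\<^sup>+x. (indicator A x) ^ 2 \<partial>M) = ennreal (measure M A)"
  proof -
    have "(indicator A x :: ennreal) ^ 2 = indicator A x" for x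
      by (simp add: indicator_def)
    then show ?thesis
      using A by (simp add: emeasure_eq_ennreal_measure)
  qed
  moreover have "f \<in> borel_measurable M"
    using borel_measurable_integrable[OF iu] unfolding f_def by measurable
  moreover have nonneg: "0 \<le> (LINT x:A|M. \<bar>u x\<bar>)" "0 \<le> (LINT x:A|M. (u x)\<^sup>2)"
    unfolding set_lebesgue_integral_def by simp_all
  ultimately have "ennreal ((LINT x:A|M. \<bar>u x\<bar>)\<^sup>2)
      \<le> ennreal ((LINT x:A|M. (u x)\<^sup>2) * measure M A)"
    using Cauchy_Schwarz_nn_integral[of f M "indicator A"] A(1)
    by (simp add: ennreal_power ennreal_mult')
  then show ?thesis
    using nonneg by (simp add: ennreal_le_iff mult.commute)
qed

lemma set_integrable_kernel:
  fixes k u :: "'a::euclidean_space \<Rightarrow> real"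
  assumes k: "continuous_on UNIV k" "\<And>z. \<bar>k z\<bar> \<le> B"
    and u: "set_integrable lebesgue A u"
  shows "set_integrable lebesgue A (\<lambda>y. k (x - y) * u y)"
proof -
  have ui: "integrable lebesgue (\<lambda>y. indicator A y * u y)"
    using u by (simp add: set_integrable_def)
  have "continuous_on UNIV (\<lambda>y. k (x - y))"
    by (rule continuous_on_compose2[OF k(1)]) (auto intro!: continuous_intros)
  then have meas: "(\<lambda>y. k (x - y) * (indicator A y * u y)) \<in> borel_measurable lebesgue"
    by (rule borel_measurable_times[OF borel_measurable_lebesgue_continuous
          borel_measurable_integrable[OF ui]])
  have "integrable lebesgue (\<lambda>y. k (x - y) * (indicator A y * u y))"
  proof (rule Bochner_Integration.integrable_bound[OF integrable_mult_right[OF ui, of B] meas])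
    have "\<bar>k (x - y)\<bar> \<le> \<bar>B\<bar>" for y
      using k(2) abs_ge_self order_trans by blast
    then show "AE y in lebesgue.
        norm (k (x - y) * (indicator A y * u y)) \<le> norm (B * (indicator A y * u y))"
      by (intro AE_I2) (simp add: abs_mult mult_right_mono)
  qed
  then show ?thesis
    by (simp add: set_integrable_def mult.left_commute)
qed

lemma continuous_on_kernel_integral:
  fixes k u :: "'a::euclidean_space \<Rightarrow> real"
  assumes k: "continuous_on UNIV k" "\<And>z. \<bar>k z\<bar> \<le> B"
    and u: "set_integrable lebesgue A u"
  shows "continuous_on UNIV (\<lambda>x. LINT y:A|lebesgue. k (x - y) * u y)"
proof (rule continuous_on_sequentiallyI)
  fix s :: "nat \<Rightarrow> 'a" and x assume s: "s \<longlonglongrightarrow> x"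
  have ku: "set_integrable lebesgue A (\<lambda>y. k (z - y) * u y)" for z
    by (rule set_integrable_kernel[OF k u])
  have "(\<lambda>n. LINT y|lebesgue. indicator A y * (k (s n - y) * u y))
    \<longlonglongrightarrow> (LINT y|lebesgue. indicator A y * (k (x - y) * u y))"
  proof (rule integral_dominated_convergence[where w = "\<lambda>y. \<bar>B\<bar> * \<bar>indicator A y * u y\<bar>"])
    show "integrable lebesgue (\<lambda>y. \<bar>B\<bar> * \<bar>indicator A y * u y\<bar>)"
      using u by (intro integrable_mult_right integrable_abs) (simp add: set_integrable_def)
    have "(\<lambda>n. k (s n - y)) \<longlonglongrightarrow> k (x - y)" for y
      using k(1) s by (intro continuous_on_tendsto_compose[of UNIV k] tendsto_intros) auto
    then show "AE y in lebesgue. (\<lambda>n. indicator A y * (k (s n - y) * u y))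
        \<longlonglongrightarrow> indicator A y * (k (x - y) * u y)"
      by (intro AE_I2 tendsto_intros)
    have "\<bar>indicator A y * (k (s n - y) * u y)\<bar> \<le> \<bar>B\<bar> * \<bar>indicator A y * u y\<bar>" for n y
    proof -
      have "\<bar>indicator A y * (k (s n - y) * u y)\<bar> = \<bar>k (s n - y)\<bar> * \<bar>indicator A y * u y\<bar>"
        by (simp add: abs_mult)
      also have "\<dots> \<le> \<bar>B\<bar> * \<bar>indicator A y * u y\<bar>"
        using k(2)[of "s n - y"] by (intro mult_right_mono) auto
      finally show ?thesis .
    qed
    then show "AE y in lebesgue. norm (indicator A y * (k (s n - y) * u y))
        \<le> \<bar>B\<bar> * \<bar>indicator A y * u y\<bar>" for n
      by simp
  qed (use ku in \<open>auto simp: set_integrable_def\<close>)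
  then show "(\<lambda>n. LINT y:A|lebesgue. k (s n - y) * u y)
    \<longlonglongrightarrow> (LINT y:A|lebesgue. k (x - y) * u y)"
    by (simp add: set_lebesgue_integral_def)
qed

lemma set_integrable_if_in_L2:
  assumes "in_L2 D u" "A \<subseteq> D" "A \<in> lmeasurable"
  shows "set_integrable lebesgue A u"
  using assms unfolding in_L2_def fmeasurable_def
  by (blast intro: set_integrable_if_square set_integrable_subset)

lemma integral_square_le_L2:
  fixes u h :: "'a::euclidean_space \<Rightarrow> real"
  assumes u: "in_L2 D u" and A: "A \<subseteq> D" "A \<in> lmeasurable"
    and h: "h \<in> borel_measurable lebesgue" "\<And>y. \<bar>h y\<bar> \<le> K * (indicator A y * \<bar>u y\<bar>)"
  shows "(integral\<^sup>L lebesgue h)\<^sup>2 \<le> K\<^sup>2 * measure lebesgue A * (LINT x:D|lebesgue. (u x)\<^sup>2)"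
proof -
  have A_sets: "A \<in> sets lebesgue" "emeasure lebesgue A < \<infinity>"
    using A(2) by (auto simp: fmeasurable_def)
  have u1: "set_integrable lebesgue A u"
    by (rule set_integrable_if_in_L2[OF u A])
  have u2: "set_integrable lebesgue A (\<lambda>x. (u x)\<^sup>2)"
    using u A A_sets unfolding in_L2_def by (blast intro: set_integrable_subset)
  have dom: "integrable lebesgue (\<lambda>y. K * (indicator A y * \<bar>u y\<bar>))"
    using integrable_abs[OF u1[unfolded set_integrable_def]]
    by (intro integrable_mult_right) (simp add: abs_mult)
  have "integrable lebesgue h"
    using h(2) abs_ge_self order_trans
    by (intro Bochner_Integration.integrable_bound[OF dom h(1)] AE_I2) (simp, blast)
  then have "\<bar>integral\<^sup>L lebesgue h\<bar> \<le> K * (LINT y:A|lebesgue. \<bar>u y\<bar>)"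
    using integral_abs_bound_integral[OF _ dom h(2)] by (simp add: set_lebesgue_integral_def)
  then have "(integral\<^sup>L lebesgue h)\<^sup>2 \<le> K\<^sup>2 * (LINT y:A|lebesgue. \<bar>u y\<bar>)\<^sup>2"
    by (metis abs_ge_zero order_trans power2_abs power_mono power_mult_distrib)
  also have "\<dots> \<le> K\<^sup>2 * (measure lebesgue A * (LINT x:A|lebesgue. (u x)\<^sup>2))"
    by (intro mult_left_mono set_integral_abs_square_le A_sets u1 u2) simp
  also have "\<dots> \<le> K\<^sup>2 * (measure lebesgue A * (LINT x:D|lebesgue. (u x)\<^sup>2))"
    using u A by (intro mult_left_mono set_integral_mono_set_nonneg) (auto simp: in_L2_def)
  finally show ?thesis
    by (simp add: mult.assoc)
qed

lemma hypH_nonneg: "hypH J \<Longrightarrow> 0 \<le> J x"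
  unfolding hypH_def by blast

lemma hypH_le_at_0: "hypH J \<Longrightarrow> J x \<le> J 0"
  unfolding hypH_def by (metis norm_zero norm_ge_zero)

lemma hypH_abs_le: "hypH J \<Longrightarrow> \<bar>J x\<bar> \<le> J 0"
  using hypH_nonneg hypH_le_at_0 by fastforce

lemma hypH_continuous: "hypH J \<Longrightarrow> continuous_on UNIV J"
  unfolding hypH_def by blast

lemma Linf_norm_hypH: "hypH J \<Longrightarrow> Linf_norm J = J 0"
  using Linf_norm_eq_max[OF hypH_continuous, of J 0]
  by (simp add: hypH_nonneg hypH_le_at_0)

definition diff_section :: "'a set \<Rightarrow> 'a set \<Rightarrow> 'a \<Rightarrow> 'a set" where
  "diff_section \<Omega>1 \<Omega>2 x = {y. (x \<in> \<Omega>1 \<and> y \<in> \<Omega>1) \<noteq> (x \<in> \<Omega>2 \<and> y \<in> \<Omega>2)}"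

lemma diff_section_cases:
  "diff_section \<Omega>1 \<Omega>2 x =
     (if x \<in> \<Omega>1 then if x \<in> \<Omega>2 then sym_diff \<Omega>1 \<Omega>2 else \<Omega>1
      else if x \<in> \<Omega>2 then \<Omega>2 else {})"
  by (auto simp: diff_section_def)

lemma measure_diff_section:
  "measure M (diff_section \<Omega>1 \<Omega>2 x) =
     measure M (sym_diff \<Omega>1 \<Omega>2) * indicator (\<Omega>1 \<inter> \<Omega>2) x
     + measure M \<Omega>1 * indicator (\<Omega>1 - \<Omega>2) x + measure M \<Omega>2 * indicator (\<Omega>2 - \<Omega>1) x"
  by (simp add: diff_section_cases indicator_def)

lemma has_bochner_integral_measure_diff_section:
  assumes "\<Omega>1 \<in> lmeasurable" "\<Omega>2 \<in> lmeasurable"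
  shows "has_bochner_integral lebesgue (\<lambda>x. measure lebesgue (diff_section \<Omega>1 \<Omega>2 x))
    (measure lebesgue (sym_diff \<Omega>1 \<Omega>2) * measure lebesgue (\<Omega>1 \<inter> \<Omega>2)
     + measure lebesgue \<Omega>1 * measure lebesgue (\<Omega>1 - \<Omega>2)
     + measure lebesgue \<Omega>2 * measure lebesgue (\<Omega>2 - \<Omega>1))"
proof -
  have "\<Omega>1 \<inter> \<Omega>2 \<in> lmeasurable" "\<Omega>1 - \<Omega>2 \<in> lmeasurable" "\<Omega>2 - \<Omega>1 \<in> lmeasurable"
    using assms by (auto intro: fmeasurable_Int_fmeasurable fmeasurable_Diff)
  then show ?thesis
    unfolding measure_diff_section fmeasurable_def
    by (intro has_bochner_integral_add has_bochner_integral_mult_right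
        has_bochner_integral_real_indicator) auto
qed

lemma integral_measure_diff_section_le:
  assumes \<Omega>: "\<Omega>1 \<in> lmeasurable" "\<Omega>2 \<in> lmeasurable"
  shows "(LINT x|lebesgue. measure lebesgue (diff_section \<Omega>1 \<Omega>2 x))
    \<le> (measure lebesgue \<Omega>1 + measure lebesgue \<Omega>2)
      * (measure lebesgue (\<Omega>1 - \<Omega>2) + measure lebesgue (\<Omega>2 - \<Omega>1))"
proof -
  have sets: "\<Omega>1 \<inter> \<Omega>2 \<in> lmeasurable" "\<Omega>1 - \<Omega>2 \<in> lmeasurable" "\<Omega>2 - \<Omega>1 \<in> lmeasurable"
    using \<Omega> by (auto intro: fmeasurable_Int_fmeasurable fmeasurable_Diff)
  define m12 m1 m2 where "m12 = measure lebesgue (\<Omega>1 \<inter> \<Omega>2)"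
    and "m1 = measure lebesgue (\<Omega>1 - \<Omega>2)" and "m2 = measure lebesgue (\<Omega>2 - \<Omega>1)"
  have "measure lebesgue (sym_diff \<Omega>1 \<Omega>2) = m1 + m2"
    unfolding m1_def m2_def using sets by (intro measure_Union) (auto simp: fmeasurable_def)
  moreover have \<Omega>_split: "measure lebesgue \<Omega>1 = m12 + m1" "measure lebesgue \<Omega>2 = m12 + m2"
    unfolding m12_def m1_def m2_def
    using measure_Un2[OF sets(1) \<Omega>(1)] measure_Un2[OF sets(1) \<Omega>(2)]
    by (simp_all add: Un_absorb1 Diff_Int)
  ultimately have "(LINT x|lebesgue. measure lebesgue (diff_section \<Omega>1 \<Omega>2 x))
      = (m1 + m2) * m12 + (m12 + m1) * m1 + (m12 + m2) * m2"
    using has_bochner_integral_integral_eq[OF has_bochner_integral_measure_diff_section[OF \<Omega>]]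
    by (simp add: m12_def m1_def m2_def)
  also have "\<dots> = ((m12 + m1) + (m12 + m2)) * (m1 + m2) - 2 * m1 * m2"
    by (simp add: algebra_simps)
  also have "\<dots> \<le> ((m12 + m1) + (m12 + m2)) * (m1 + m2)"
    by (simp add: m1_def m2_def)
  finally show ?thesis
    by (simp add: \<Omega>_split m1_def m2_def)
qed

lemma Jt_eq_integral:
  "Jt J \<Omega> u x = indicator \<Omega> x * (LINT y|lebesgue. indicator \<Omega> y * (J (x - y) * u y))"
  by (simp add: Jt_def set_lebesgue_integral_def indicator_def)

lemma borel_measurable_Jt:
  assumes "hypH J" "\<Omega> \<in> sets lebesgue" "set_integrable lebesgue \<Omega> u"
  shows "Jt J \<Omega> u \<in> borel_measurable lebesgue"
proof -
  have "(\<lambda>x. LINT y:\<Omega>|lebesgue. J (x - y) * u y) \<in> borel_measurable lebesgue"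
    using assms hypH_continuous hypH_abs_le
    by (intro borel_measurable_lebesgue_continuous continuous_on_kernel_integral) auto
  then have "(\<lambda>x. indicator \<Omega> x * (LINT y:\<Omega>|lebesgue. J (x - y) * u y))
      \<in> borel_measurable lebesgue"
    using assms(2) by measurable
  then show ?thesis
    unfolding Jt_eq_integral[abs_def] by (simp add: set_lebesgue_integral_def)
qed

lemma Jt_diff_square_le:
  fixes J u :: "'a::euclidean_space \<Rightarrow> real"
  assumes H: "hypH J" and u: "in_L2 D u"
    and \<Omega>: "\<Omega>1 \<in> lmeasurable" "\<Omega>2 \<in> lmeasurable" "\<Omega>1 \<subseteq> D" "\<Omega>2 \<subseteq> D"
  shows "(Jt J \<Omega>1 u x - Jt J \<Omega>2 u x)\<^sup>2
    \<le> (J 0)\<^sup>2 * measure lebesgue (diff_section \<Omega>1 \<Omega>2 x) * (LINT y:D|lebesgue. (u y)\<^sup>2)"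
proof -
  define k where "k \<Omega> y = indicator \<Omega> y * (J (x - y) * u y)" for \<Omega> y
  have k_int: "integrable lebesgue (k \<Omega>)" if "\<Omega> \<in> lmeasurable" "\<Omega> \<subseteq> D" for \<Omega>
    using set_integrable_kernel[OF hypH_continuous[OF H] hypH_abs_le[OF H]
        set_integrable_if_in_L2[OF u that(2,1)]]
    by (simp add: k_def[abs_def] set_integrable_def)
  define h where "h y = indicator \<Omega>1 x * k \<Omega>1 y - indicator \<Omega>2 x * k \<Omega>2 y" for y
  have h_int: "integrable lebesgue h"
    unfolding h_def using k_int \<Omega> by auto
  have "Jt J \<Omega>1 u x - Jt J \<Omega>2 u x
      = indicator \<Omega>1 x * integral\<^sup>L lebesgue (k \<Omega>1)
        - indicator \<Omega>2 x * integral\<^sup>L lebesgue (k \<Omega>2)"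
    by (simp add: Jt_eq_integral k_def[abs_def])
  also have "\<dots> = integral\<^sup>L lebesgue h"
    unfolding h_def using k_int \<Omega> by simp
  finally have "Jt J \<Omega>1 u x - Jt J \<Omega>2 u x = integral\<^sup>L lebesgue h" .
  moreover have "\<bar>h y\<bar> \<le> J 0 * (indicator (diff_section \<Omega>1 \<Omega>2 x) y * \<bar>u y\<bar>)" for y
    using hypH_abs_le[OF H, of "x - y"]
    by (auto simp: h_def k_def diff_section_def indicator_def abs_mult mult_right_mono)
  moreover have "diff_section \<Omega>1 \<Omega>2 x \<in> lmeasurable"
    using \<Omega> by (auto simp: diff_section_cases intro: fmeasurable_Diff)
  moreover have "diff_section \<Omega>1 \<Omega>2 x \<subseteq> D"
    using \<Omega> by (auto simp: diff_section_def)
  ultimately show ?thesis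
    using integral_square_le_L2[OF u _ _ borel_measurable_integrable[OF h_int]] by simp
qed

lemma
  fixes J u :: "'a::euclidean_space \<Rightarrow> real"
  assumes H: "hypH J" and D: "D \<in> sets lebesgue" and u: "in_L2 D u"
    and \<Omega>: "\<Omega>1 \<in> lmeasurable" "\<Omega>2 \<in> lmeasurable" "\<Omega>1 \<subseteq> D" "\<Omega>2 \<subseteq> D"
  shows in_L2_Jt_diff: "in_L2 D (\<lambda>x. Jt J \<Omega>1 u x - Jt J \<Omega>2 u x)"
    and L2norm_Jt_diff_le: "L2norm D (\<lambda>x. Jt J \<Omega>1 u x - Jt J \<Omega>2 u x)
      \<le> sqrt (measure lebesgue \<Omega>1 + measure lebesgue \<Omega>2) * Linf_norm J
        * (measure lebesgue (\<Omega>1 - \<Omega>2) + measure lebesgue (\<Omega>2 - \<Omega>1)) powr (1/2)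
        * L2norm D u"
proof -
  define f where "f x = Jt J \<Omega>1 u x - Jt J \<Omega>2 u x" for x
  define U where "U = (LINT y:D|lebesgue. (u y)\<^sup>2)"
  define g where "g x = (J 0)\<^sup>2 * U * measure lebesgue (diff_section \<Omega>1 \<Omega>2 x)" for x
  have f_le_g: "(f x)\<^sup>2 \<le> g x" for x
    unfolding f_def g_def U_def using Jt_diff_square_le[OF H u \<Omega>] by (simp add: mult_ac)
  have g_int: "integrable lebesgue g"
    unfolding g_def using has_bochner_integral_measure_diff_section[OF \<Omega>(1,2)]
    by (intro integrable_mult_right) (simp add: has_bochner_integral_iff)
  have "f \<in> borel_measurable lebesgue"
    unfolding f_def using H \<Omega> set_integrable_if_in_L2[OF u]
    by (intro borel_measurable_diff borel_measurable_Jt) auto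
  moreover have "set_integrable lebesgue D (\<lambda>x. (f x)\<^sup>2)"
    unfolding set_integrable_def
  proof (rule Bochner_Integration.integrable_bound[OF g_int])
    show "(\<lambda>x. indicator D x *\<^sub>R (f x)\<^sup>2) \<in> borel_measurable lebesgue"
      using \<open>f \<in> borel_measurable lebesgue\<close> D by measurable
    show "AE x in lebesgue. norm (indicator D x *\<^sub>R (f x)\<^sup>2) \<le> norm (g x)"
      using f_le_g order_trans[OF zero_le_power2 f_le_g] by (intro AE_I2) (simp add: indicator_def)
  qed
  ultimately show "in_L2 D (\<lambda>x. Jt J \<Omega>1 u x - Jt J \<Omega>2 u x)"
    by (simp add: in_L2_def f_def[abs_def])
  have "(LINT x:D|lebesgue. (f x)\<^sup>2) \<le> integral\<^sup>L lebesgue g"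
    unfolding set_lebesgue_integral_def
    using g_int f_le_g order_trans[OF zero_le_power2 f_le_g]
    by (intro integral_mono') (auto simp: indicator_def)
  also have "\<dots> = (J 0)\<^sup>2 * U * (LINT x|lebesgue. measure lebesgue (diff_section \<Omega>1 \<Omega>2 x))"
    by (simp add: g_def[abs_def])
  also have "\<dots> \<le> (J 0)\<^sup>2 * U * ((measure lebesgue \<Omega>1 + measure lebesgue \<Omega>2)
      * (measure lebesgue (\<Omega>1 - \<Omega>2) + measure lebesgue (\<Omega>2 - \<Omega>1)))"
    unfolding U_def set_lebesgue_integral_def
    by (intro mult_left_mono integral_measure_diff_section_le[OF \<Omega>(1,2)]) simp
  finally have "L2norm D f \<le> sqrt ((J 0)\<^sup>2 * U * ((measure lebesgue \<Omega>1 + measure lebesgue \<Omega>2)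
      * (measure lebesgue (\<Omega>1 - \<Omega>2) + measure lebesgue (\<Omega>2 - \<Omega>1))))"
    unfolding L2norm_def by (rule real_sqrt_le_mono)
  then show "L2norm D (\<lambda>x. Jt J \<Omega>1 u x - Jt J \<Omega>2 u x)
      \<le> sqrt (measure lebesgue \<Omega>1 + measure lebesgue \<Omega>2) * Linf_norm J
        * (measure lebesgue (\<Omega>1 - \<Omega>2) + measure lebesgue (\<Omega>2 - \<Omega>1)) powr (1/2)
        * L2norm D u"
    using hypH_nonneg[OF H, of 0]
    by (simp add: f_def[abs_def] U_def L2norm_def Linf_norm_hypH[OF H] powr_half_sqrt
        real_sqrt_mult mult_ac)
qed

theorem lemma3p1:
  "\<exists>C :: real \<Rightarrow> real \<Rightarrow> real. (\<forall>a b. 0 < C a b) \<and>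
     (\<forall>(J :: 'a::euclidean_space \<Rightarrow> real) D \<Omega>1 \<Omega>2.
        hypH J \<and> bounded D \<and> D \<in> sets lebesgue
        \<and> open \<Omega>1 \<and> bounded \<Omega>1 \<and> \<Omega>1 \<subseteq> D
        \<and> open \<Omega>2 \<and> bounded \<Omega>2 \<and> \<Omega>2 \<subseteq> D \<longrightarrow>
        (\<forall>u. in_L2 D u \<longrightarrow>
           in_L2 D (\<lambda>x. Jt J \<Omega>1 u x - Jt J \<Omega>2 u x) \<and>
           L2norm D (\<lambda>x. Jt J \<Omega>1 u x - Jt J \<Omega>2 u x)
             \<le> C (measure lebesgue \<Omega>1) (measure lebesgue \<Omega>2) * Linf_norm J
               * (measure lebesgue (\<Omega>1 - \<Omega>2) + measure lebesgue (\<Omega>2 - \<Omega>1)) powr (1/2)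
               * L2norm D u))"
proof (rule exI[of _ "\<lambda>a b. sqrt (\<bar>a\<bar> + \<bar>b\<bar> + 1)"], intro conjI allI impI)
  show "0 < sqrt (\<bar>a\<bar> + \<bar>b\<bar> + 1)" for a b :: real
    by (simp add: add_nonneg_pos)
  fix J u :: "'a \<Rightarrow> real" and D \<Omega>1 \<Omega>2 :: "'a set"
  assume "hypH J \<and> bounded D \<and> D \<in> sets lebesgue
    \<and> open \<Omega>1 \<and> bounded \<Omega>1 \<and> \<Omega>1 \<subseteq> D \<and> open \<Omega>2 \<and> bounded \<Omega>2 \<and> \<Omega>2 \<subseteq> D"
  then have H: "hypH J" and D: "D \<in> sets lebesgue"
    and \<Omega>: "\<Omega>1 \<in> lmeasurable" "\<Omega>2 \<in> lmeasurable" "\<Omega>1 \<subseteq> D" "\<Omega>2 \<subseteq> D"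
    by (auto intro: lmeasurable_open)
  assume u: "in_L2 D u"
  show "in_L2 D (\<lambda>x. Jt J \<Omega>1 u x - Jt J \<Omega>2 u x)"
    by (rule in_L2_Jt_diff[OF H D u \<Omega>])
  have "sqrt (measure lebesgue \<Omega>1 + measure lebesgue \<Omega>2)
      \<le> sqrt (\<bar>measure lebesgue \<Omega>1\<bar> + \<bar>measure lebesgue \<Omega>2\<bar> + 1)"
    by simp
  then show "L2norm D (\<lambda>x. Jt J \<Omega>1 u x - Jt J \<Omega>2 u x)
    \<le> sqrt (\<bar>measure lebesgue \<Omega>1\<bar> + \<bar>measure lebesgue \<Omega>2\<bar> + 1) * Linf_norm J
      * (measure lebesgue (\<Omega>1 - \<Omega>2) + measure lebesgue (\<Omega>2 - \<Omega>1)) powr (1/2) * L2norm D u"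
    using L2norm_Jt_diff_le[OF H D u \<Omega>] hypH_nonneg[OF H, of 0]
    by (elim order_trans)
      (intro mult_right_mono; simp add: Linf_norm_hypH[OF H] L2norm_def set_lebesgue_integral_def)
qed

end
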